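(* Let $p\in[1,\infty]$, let $A\in\mathbb{R}^{m\times n}$ have full column rank, and let $\mathcal{A} = \{Ax: x\in\mathbb{R}^n\}$. Let $\Phi\in\mathbb{R}^{s\times m}$ with $s\ge n$, and suppose there are $\sigma_\Phi>0$, $\kappa_\Phi\ge1$ with $$\sigma_\Phi\|y\|_p \le \|\Phi y\|_p \le \kappa_\Phi\sigma_\Phi\|y\|_p\quad\text{for all } y\in\mathcal{A}.$$ Let $\Phi A = QR$ be a thin QR factorization, with $Q\in\mathbb{R}^{s\times n}$ having orthonormal columns and $R\in\mathbb{R}^{n\times n}$ invertible. Then $\kappa_p(AR^{-1}) \le \kappa_\Phi\, s^{|1/p-1/2|}$.
   Context: For $M \in \mathbb{R}^{m\times n}$, $\sigma_p^{\max}(M) = \max_{\|x\|_2=1}\|Mx\|_p$, $\sigma_p^{\min}(M) = \min_{\|x\|_2=1}\|Mx\|_p$, and $\kappa_p(M) = \sigma_p^{\max}(M)/\sigma_p^{\min}(M)$. Convention $1/\infty = 0$. *)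

theory Defs
  imports "HOL-Analysis.Analysis" "HOL-Library.Extended_Real"
begin

definition pinv :: "ereal \<Rightarrow> real" where
  "pinv p = (if p = \<infinity> then 0 else 1 / real_of_ereal p)"

definition pnorm :: "ereal \<Rightarrow> real^'k \<Rightarrow> real" where
  "pnorm p x = (if p = \<infinity> then Max (range (\<lambda>i. \<bar>x $ i\<bar>))
                else (\<Sum>i\<in>UNIV. \<bar>x $ i\<bar> powr real_of_ereal p) powr (1 / real_of_ereal p))"

definition sigma_max :: "ereal \<Rightarrow> real^'n^'m \<Rightarrow> real" where
  "sigma_max p M = (SUP x\<in>{x :: real^'n. norm x = 1}. pnorm p (M *v x))"

definition sigma_min :: "ereal \<Rightarrow> real^'n^'m \<Rightarrow> real" where
  "sigma_min p M = (INF x\<in>{x :: real^'n. norm x = 1}. pnorm p (M *v x))"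

definition kappa :: "ereal \<Rightarrow> real^'n^'m \<Rightarrow> real" where
  "kappa p M = sigma_max p M / sigma_min p M"

end

theory Submission
  imports Defs
begin

text \<open>
  Since \<open>\<Phi> A R\<^sup>-\<^sup>1 = Q\<close> has orthonormal columns, \<open>x \<mapsto> Q x\<close> is a Euclidean isometry.
  On \<open>\<real>\<^sup>s\<close> the \<open>p\<close>-norm is equivalent to the Euclidean norm with constants
  \<open>L\<close> and \<open>L s\<^bsup>|1/p - 1/2|\<^esup>\<close>, so \<open>\<parallel>Q x\<parallel>\<^sub>p\<close> lies between these constants for
  every Euclidean unit vector \<open>x\<close>. The embedding property of \<open>\<Phi>\<close> on the range of \<open>A\<close>
  transfers these bounds to \<open>\<parallel>A R\<^sup>-\<^sup>1 x\<parallel>\<^sub>p\<close>, losing the factor \<open>\<kappa>\<^sub>\<Phi>\<close> in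
  their ratio; the unknown constant \<open>L\<close> cancels in the condition number.
\<close>

lemma sum_powr_le_powr_sum:
  fixes a :: "'a \<Rightarrow> real"
  assumes "finite I" "\<And>i. i \<in> I \<Longrightarrow> a i \<ge> 0" "r \<ge> 1"
  shows "(\<Sum>i\<in>I. a i powr r) \<le> (\<Sum>i\<in>I. a i) powr r"
proof -
  define S where "S = (\<Sum>i\<in>I. a i)"
  have powr_split: "x powr r = x * x powr (r - 1)" if "x \<ge> 0" for x :: real
    using that by (cases "x = 0") (auto simp: powr_mult_base)
  have "(\<Sum>i\<in>I. a i powr r) = (\<Sum>i\<in>I. a i * a i powr (r - 1))"
    using assms(2) by (intro sum.cong refl powr_split)
  also have "\<dots> \<le> (\<Sum>i\<in>I. a i * S powr (r - 1))"
    unfolding S_def using assms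
    by (intro sum_mono mult_left_mono powr_mono2 member_le_sum) auto
  also have "\<dots> = S powr r"
    using assms(2) by (simp add: powr_split S_def sum_nonneg flip: sum_distrib_right)
  finally show ?thesis by (simp add: S_def)
qed

lemma powr_sum_le_card_powr_sum:
  fixes a :: "'a \<Rightarrow> real"
  assumes "finite I" "\<And>i. i \<in> I \<Longrightarrow> a i \<ge> 0" "r \<ge> 1"
  shows "(\<Sum>i\<in>I. a i) powr r \<le> real (card I) powr (r - 1) * (\<Sum>i\<in>I. a i powr r)"
proof -
  define J where "J = {i\<in>I. a i > 0}"
  have J: "finite J" "J \<subseteq> I" using assms by (auto simp: J_def)
  have sum_J: "(\<Sum>i\<in>I. f i) = (\<Sum>i\<in>J. f i)" if "\<And>i. i \<in> I \<Longrightarrow> a i = 0 \<Longrightarrow> f i = 0"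
    for f :: "'a \<Rightarrow> real"
    using assms that by (intro sum.mono_neutral_right) (auto simp: J_def less_le)
  show ?thesis
  proof (cases "J = {}")
    case True
    then show ?thesis using sum_J[of a] by (simp add: sum_nonneg)
  next
    case False
    define k where "k = real (card J)"
    have k: "k > 0" using J False by (simp add: k_def card_gt_0_iff)
    \<comment> \<open>Jensen for the uniform average; \<open>powr_convex\<close> only covers \<open>{0<..}\<close>, hence the restriction to \<open>J\<close>\<close>
    have "(\<Sum>i\<in>J. (1/k) *\<^sub>R a i) powr r \<le> (\<Sum>i\<in>J. (1/k) * a i powr r)"
      using convex_on_sum[OF J(1) False powr_convex[OF assms(3)], of "\<lambda>_. 1/k" a] k
      by (auto simp: k_def J_def)
    then have "((\<Sum>i\<in>J. a i) / k) powr r \<le> (\<Sum>i\<in>J. a i powr r) / k"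
      by (simp add: divide_inverse mult.commute flip: sum_distrib_left)
    then have "(\<Sum>i\<in>J. a i) powr r \<le> k powr (r - 1) * (\<Sum>i\<in>J. a i powr r)"
      using k assms(2) J by (auto simp: powr_divide powr_diff sum_nonneg subset_iff field_simps)
    also have "\<dots> \<le> real (card I) powr (r - 1) * (\<Sum>i\<in>J. a i powr r)"
      using assms J False k by (intro mult_right_mono powr_mono2 sum_nonneg) (auto simp: k_def card_mono)
    finally show ?thesis using sum_J[of a] sum_J[of "\<lambda>i. a i powr r"] by simp
  qed
qed

lemma pnorm_ereal: "pnorm (ereal r) y = (\<Sum>i\<in>UNIV. \<bar>y $ i\<bar> powr r) powr (1 / r)"
  by (simp add: pnorm_def)

lemma norm_eq_pnorm_2: "norm y = pnorm 2 y"
  by (simp add: pnorm_def norm_vec_def L2_set_def powr_half_sqrt sum_nonneg)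

lemma pnorm_antimono_exponent:
  fixes y :: "real^'k"
  assumes "0 < r" "r \<le> q"
  shows "pnorm (ereal q) y \<le> pnorm (ereal r) y"
proof -
  define a where "a i = \<bar>y $ i\<bar> powr r" for i
  have "(\<Sum>i\<in>UNIV. \<bar>y $ i\<bar> powr q) = (\<Sum>i\<in>UNIV. a i powr (q / r))"
    using assms by (simp add: a_def powr_powr)
  also have "\<dots> \<le> (\<Sum>i\<in>UNIV. a i) powr (q / r)"
    using assms by (intro sum_powr_le_powr_sum) (auto simp: a_def)
  finally have "(\<Sum>i\<in>UNIV. \<bar>y $ i\<bar> powr q) powr (1 / q) \<le> ((\<Sum>i\<in>UNIV. a i) powr (q / r)) powr (1 / q)"
    using assms by (intro powr_mono2) (auto intro: sum_nonneg)
  then show ?thesis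
    using assms by (simp add: pnorm_ereal powr_powr a_def)
qed

lemma pnorm_le_card_powr_pnorm:
  fixes y :: "real^'k"
  assumes "0 < r" "r \<le> q"
  shows "pnorm (ereal r) y \<le> real CARD('k) powr (1/r - 1/q) * pnorm (ereal q) y"
proof -
  define a where "a i = \<bar>y $ i\<bar> powr r" for i
  define t where "t = q / r"
  have t: "t \<ge> 1" using assms by (simp add: t_def)
  have "(\<Sum>i\<in>UNIV. a i) powr t \<le> real CARD('k) powr (t - 1) * (\<Sum>i\<in>UNIV. a i powr t)"
    using t by (intro powr_sum_le_card_powr_sum) (auto simp: a_def)
  then have "((\<Sum>i\<in>UNIV. a i) powr t) powr (1/q)
      \<le> (real CARD('k) powr (t - 1) * (\<Sum>i\<in>UNIV. \<bar>y $ i\<bar> powr q)) powr (1/q)"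
    using assms by (intro powr_mono2) (auto simp: a_def t_def powr_powr intro: sum_nonneg)
  then show ?thesis
    using assms
    by (simp add: pnorm_ereal a_def t_def powr_powr powr_mult sum_nonneg diff_divide_distrib)
qed

lemma pnorm_infinity_le:
  fixes y :: "real^'k"
  assumes "0 < r"
  shows "pnorm \<infinity> y \<le> pnorm (ereal r) y"
proof -
  have "pnorm \<infinity> y \<in> range (\<lambda>i. \<bar>y $ i\<bar>)"
    by (simp add: pnorm_def del: image_iff)
  then obtain j where j: "pnorm \<infinity> y = \<bar>y $ j\<bar>" by blast
  have "\<bar>y $ j\<bar> powr r \<le> (\<Sum>i\<in>UNIV. \<bar>y $ i\<bar> powr r)"
    by (intro member_le_sum) auto
  then have "(\<bar>y $ j\<bar> powr r) powr (1/r) \<le> (\<Sum>i\<in>UNIV. \<bar>y $ i\<bar> powr r) powr (1/r)"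
    using assms by (intro powr_mono2) auto
  then show ?thesis
    using assms by (simp add: j pnorm_ereal powr_powr)
qed

lemma pnorm_le_card_powr_pnorm_infinity:
  fixes y :: "real^'k"
  assumes "0 < r"
  shows "pnorm (ereal r) y \<le> real CARD('k) powr (1/r) * pnorm \<infinity> y"
proof -
  define M where "M = pnorm \<infinity> y"
  have le_M: "\<bar>y $ i\<bar> \<le> M" for i
    by (simp add: M_def pnorm_def)
  have "(\<Sum>i\<in>UNIV. \<bar>y $ i\<bar> powr r) \<le> (\<Sum>i\<in>(UNIV::'k set). M powr r)"
    using assms le_M by (intro sum_mono powr_mono2) auto
  then have "(\<Sum>i\<in>UNIV. \<bar>y $ i\<bar> powr r) powr (1/r) \<le> (real CARD('k) * M powr r) powr (1/r)"
    using assms by (intro powr_mono2) (auto intro: sum_nonneg)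
  then show ?thesis
    using assms le_M[of undefined] by (simp add: pnorm_ereal powr_mult powr_powr M_def)
qed

lemma pnorm_equiv_norm:
  assumes "1 \<le> p"
  shows "\<exists>L>0. \<forall>y::real^'k. L * norm y \<le> pnorm p y \<and>
           pnorm p y \<le> L * real CARD('k) powr \<bar>pinv p - 1/2\<bar> * norm y"
proof -
  define s where "s = real CARD('k)"
  have s: "s > 0" by (simp add: s_def)
  have scale: "s powr a * (s powr b * x) = s powr (a + b) * x" for a b x
    using s by (simp add: powr_add)
  consider "p = \<infinity>" | q where "p = ereal q" "2 \<le> q" | q where "p = ereal q" "1 \<le> q" "q < 2"
    using assms by (cases p) force+
  then show ?thesis
  proof cases
    case 1
    show ?thesis
    proof (intro exI[of _ "s powr (-1/2)"] conjI allI)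
      fix y :: "real^'k"
      have "s powr (-1/2) * norm y \<le> s powr (-1/2) * (s powr (1/2) * pnorm \<infinity> y)"
        using pnorm_le_card_powr_pnorm_infinity[of 2 y]
        by (intro mult_left_mono) (simp_all add: norm_eq_pnorm_2 s_def)
      then show "s powr (-1/2) * norm y \<le> pnorm p y"
        using s by (simp add: 1 scale)
      show "pnorm p y \<le> s powr (-1/2) * real CARD('k) powr \<bar>pinv p - 1/2\<bar> * norm y"
        using pnorm_infinity_le[of 2 y] s
        by (simp add: 1 pinv_def norm_eq_pnorm_2 s_def[symmetric] powr_add[symmetric])
    qed (simp add: s_def)
  next
    case 2
    have e: "\<bar>pinv (ereal q) - 1/2\<bar> = 1/2 - 1/q" using 2 by (simp add: pinv_def field_simps)
    show ?thesis
    proof (intro exI[of _ "s powr (1/q - 1/2)"] conjI allI)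
      fix y :: "real^'k"
      have "s powr (1/q - 1/2) * norm y \<le> s powr (1/q - 1/2) * (s powr (1/2 - 1/q) * pnorm p y)"
        using pnorm_le_card_powr_pnorm[of 2 q y] 2
        by (intro mult_left_mono) (simp_all add: norm_eq_pnorm_2 s_def)
      then show "s powr (1/q - 1/2) * norm y \<le> pnorm p y"
        using s by (simp add: scale)
      show "pnorm p y \<le> s powr (1/q - 1/2) * real CARD('k) powr \<bar>pinv p - 1/2\<bar> * norm y"
        using pnorm_antimono_exponent[of 2 q y] 2 s
        by (simp add: e norm_eq_pnorm_2 s_def[symmetric] powr_add[symmetric])
    qed (simp add: s_def)
  next
    case 3
    have e: "\<bar>pinv (ereal q) - 1/2\<bar> = 1/q - 1/2" using 3 by (simp add: pinv_def field_simps)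
    show ?thesis
    proof (intro exI[of _ 1] conjI allI)
      fix y :: "real^'k"
      show "1 * norm y \<le> pnorm p y"
        using pnorm_antimono_exponent[of q 2 y] 3 by (simp add: norm_eq_pnorm_2)
      show "pnorm p y \<le> 1 * real CARD('k) powr \<bar>pinv p - 1/2\<bar> * norm y"
        using pnorm_le_card_powr_pnorm[of q 2 y] 3 by (simp add: e norm_eq_pnorm_2)
    qed simp
  qed
qed

lemma matrix_mul_matrix_inv:
  fixes R :: "'a::semiring_1^'n^'m"
  assumes "invertible R"
  shows "R ** matrix_inv R = mat 1"
proof -
  have "\<exists>R'. R ** R' = mat 1 \<and> R' ** R = mat 1"
    using assms by (simp add: invertible_def)
  then show ?thesis
    unfolding matrix_inv_def by (rule someI2_ex) blast
qed

lemma norm_matrix_vector_mul_orthonormal_columns: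
  fixes Q :: "real^'n^'m"
  assumes "transpose Q ** Q = mat 1"
  shows "norm (Q *v x) = norm x"
proof -
  have "inner (Q *v x) (Q *v x) = inner x (transpose Q *v (Q *v x))"
    by (metis dot_lmul_matrix vector_transpose_matrix)
  also have "\<dots> = inner x x"
    by (simp add: matrix_vector_mul_assoc assms)
  finally show ?thesis by (simp add: norm_eq_sqrt_inner)
qed

lemma kappa_le_of_bounds_on_sphere:
  fixes M :: "real^'n^'m"
  assumes "a > 0"
    and "\<And>x. norm x = 1 \<Longrightarrow> a \<le> pnorm p (M *v x) \<and> pnorm p (M *v x) \<le> b"
  shows "kappa p M \<le> b / a"
proof -
  obtain x0 :: "real^'n" where x0: "norm x0 = 1"
    using vector_choose_size[of 1] by auto
  then have sphere: "{x :: real^'n. norm x = 1} \<noteq> {}" by blast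
  have "sigma_max p M \<le> b"
    unfolding sigma_max_def by (rule cSUP_least[OF sphere]) (use assms(2) in auto)
  moreover have "a \<le> sigma_min p M"
    unfolding sigma_min_def by (rule cINF_greatest[OF sphere]) (use assms(2) in auto)
  moreover have "0 \<le> b"
    using assms x0 by (meson less_le order_trans)
  ultimately show ?thesis
    unfolding kappa_def using assms(1) by (intro frac_le) auto
qed

theorem mainTheorem7:
  fixes p :: ereal
    and A :: "real^'n^'m"
    and Phi :: "real^'m^'s"
    and Q :: "real^'n^'s"
    and R :: "real^'n^'n"
    and sigmaPhi kappaPhi :: real
  assumes p: "1 \<le> p"
    and rankA: "rank A = CARD('n)"
    and sn: "CARD('s) \<ge> CARD('n)"
    and sigma_pos: "sigmaPhi > 0"
    and kappa_ge: "kappaPhi \<ge> 1"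
    and embed: "\<And>y. y \<in> range (\<lambda>x. A *v x) \<Longrightarrow>
                  sigmaPhi * pnorm p y \<le> pnorm p (Phi *v y) \<and>
                  pnorm p (Phi *v y) \<le> kappaPhi * sigmaPhi * pnorm p y"
    and QR: "Phi ** A = Q ** R"
    and Qorth: "transpose Q ** Q = mat 1"
    and Rinv: "invertible R"
  shows "kappa p (A ** matrix_inv R) \<le> kappaPhi * real CARD('s) powr \<bar>pinv p - 1/2\<bar>"
proof -
  define c where "c = real CARD('s) powr \<bar>pinv p - 1/2\<bar>"
  obtain L where L: "L > 0"
    and L_bounds: "\<And>y::real^'s. L * norm y \<le> pnorm p y \<and> pnorm p y \<le> L * c * norm y"
    using pnorm_equiv_norm[OF p] unfolding c_def by blast
  have Phi_AR: "Phi *v ((A ** matrix_inv R) *v x) = Q *v x" for x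
  proof -
    have "Phi *v ((A ** matrix_inv R) *v x) = (Q ** (R ** matrix_inv R)) *v x"
      by (simp add: matrix_vector_mul_assoc matrix_mul_assoc QR)
    then show ?thesis
      by (simp add: matrix_mul_matrix_inv[OF Rinv])
  qed
  have "L / (kappaPhi * sigmaPhi) \<le> pnorm p ((A ** matrix_inv R) *v x) \<and>
        pnorm p ((A ** matrix_inv R) *v x) \<le> L * c / sigmaPhi" if "norm x = 1" for x
  proof -
    have "(A ** matrix_inv R) *v x \<in> range (\<lambda>x. A *v x)"
      by (simp flip: matrix_vector_mul_assoc)
    from embed[OF this] have
      "sigmaPhi * pnorm p ((A ** matrix_inv R) *v x) \<le> pnorm p (Q *v x)"
      "pnorm p (Q *v x) \<le> kappaPhi * sigmaPhi * pnorm p ((A ** matrix_inv R) *v x)"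
      by (simp_all add: Phi_AR)
    moreover have "L \<le> pnorm p (Q *v x)" "pnorm p (Q *v x) \<le> L * c"
      using L_bounds[of "Q *v x"] by (simp_all add: norm_matrix_vector_mul_orthonormal_columns[OF Qorth] that)
    moreover have "kappaPhi * sigmaPhi > 0"
      using sigma_pos kappa_ge by simp
    ultimately show ?thesis
      using sigma_pos by (simp add: pos_divide_le_eq pos_le_divide_eq mult.commute)
  qed
  then have "kappa p (A ** matrix_inv R) \<le> (L * c / sigmaPhi) / (L / (kappaPhi * sigmaPhi))"
    using L sigma_pos kappa_ge by (intro kappa_le_of_bounds_on_sphere) auto
  also have "\<dots> = kappaPhi * c"
    using L sigma_pos by (simp add: field_simps)
  finally show ?thesis by (simp add: c_def)
qed

end
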